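(* Let $\mathcal V$ be a finite set of agents, $\mathcal L\subseteq\mathcal V$ a set of leaders, $\overline\pi\in\mathbb N_{\geq 1}$, and $\delta\geq 0$ an integer bound on communication delays. For each time $t\in\mathbb N$ let $\mathcal N_i^t\subseteq\mathcal V$ be the in-neighborhood of agent $i$ (with $i\in\mathcal N_i^t$), and let $\mathcal E^t=\{(j,i): j\in\mathcal N_i^t\}$. Hierarchy levels $\pi_i^t\in\{0,1,\dots,\overline\pi\}$ evolve as follows: $\pi_\ell^t=0$ for all $t$ and all $\ell\in\mathcal L$; for each follower $i\in\mathcal V\setminus\mathcal L$, $\pi_i^0=\overline\pi$ and for $t\geq 1$ $$\pi_i^t=\min\Bigl\{\overline\pi,\;1+\min_{j\in\mathcal N_i^t\setminus\{i\}}\pi_j^{\,t-\delta^t_{j|i}-1}\Bigr\},$$ where $\delta^t_{j|i}\in\{0,\dots,\delta\}$ is the delay with which $i$ receives $j$'s information at time $t$ (with $t-\delta^t_{j|i}-1\geq 0$), and the inner minimum over an empty set is $+\infty$. Let $D\in\{0,1,\dots,\overline\pi\}$ and let $\bar t\geq(\delta+1)D$ be such that $\mathcal E^s=\mathcal E^{\bar t}$ for all $s$ with $\bar t-(\delta+1)D\leq s\leq\bar t$. Then for every agent $i\in\mathcal V$, $$\pi_i^{\bar t}=D_i^{\mathcal E^{\bar t}}\quad\text{if } D_i^{\mathcal E^{\bar t}}\leq D,\qquad \pi_i^{\bar t}>D\quad\text{otherwise}.$$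
   Context: For a directed graph $(\mathcal V,\mathcal E)$ whose edge $(j,i)\in\mathcal E$ means that $j$ is an in-neighbor of $i$ (i.e., information flows from $j$ to $i$), the graph distance from a leader $\ell$ to agent $i$ is the smallest $\eta\geq 0$ such that there is a sequence $\ell=j_0,j_1,\dots,j_\eta=i$ with $(j_{k},j_{k+1})\in\mathcal E$ for all $k<\eta$ (it is $+\infty$ if no such sequence exists, and $0$ iff $i=\ell$). The exact hierarchy level of $i$ with respect to $\mathcal E$ is $D_i^{\mathcal E}=\min\{\overline\pi,\ \min_{\ell\in\mathcal L}\operatorname{dist}^{\mathcal E}(\ell,i)\}$. (In the paper's application the connectivity is proximity-based and hence symmetric, so the direction of paths is immaterial there.) *)

theory Defs
  imports Main "HOL-Library.Extended_Nat"
begin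

definition edges :: "'a set \<Rightarrow> (nat \<Rightarrow> 'a \<Rightarrow> 'a set) \<Rightarrow> nat \<Rightarrow> ('a \<times> 'a) set" where
  "edges V N t = {(j, i). i \<in> V \<and> j \<in> N t i}"

definition walk_len :: "('a \<times> 'a) set \<Rightarrow> 'a \<Rightarrow> 'a \<Rightarrow> nat \<Rightarrow> bool" where
  "walk_len E l i eta \<longleftrightarrow>
     (\<exists>p :: nat \<Rightarrow> 'a. p 0 = l \<and> p eta = i \<and> (\<forall>k<eta. (p k, p (Suc k)) \<in> E))"

definition gdist :: "('a \<times> 'a) set \<Rightarrow> 'a \<Rightarrow> 'a \<Rightarrow> enat" where
  "gdist E l i = (if \<exists>eta. walk_len E l i eta then enat (LEAST eta. walk_len E l i eta) else \<infinity>)"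

definition exact_level :: "nat \<Rightarrow> 'a set \<Rightarrow> ('a \<times> 'a) set \<Rightarrow> 'a \<Rightarrow> enat" where
  "exact_level pibar L E i = min (enat pibar) (INF l\<in>L. gdist E l i)"

definition follower_update ::
  "nat \<Rightarrow> (nat \<Rightarrow> 'a \<Rightarrow> nat) \<Rightarrow> (nat \<Rightarrow> 'a \<Rightarrow> 'a set) \<Rightarrow> (nat \<Rightarrow> 'a \<Rightarrow> 'a \<Rightarrow> nat)
     \<Rightarrow> nat \<Rightarrow> 'a \<Rightarrow> nat" where
  "follower_update pibar lev N d t i =
     (let S = (\<lambda>j. lev (t - d t j i - 1) j) ` (N t i - {i}) in
      if S = {} then pibar else min pibar (1 + Min S))"

end

theory Submission
  imports Defs
begin

text \<open>The exact levels satisfy the Bellman equation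
  \<open>e i = min pibar (1 + min {e j | j strict in-neighbour of i})\<close> for followers, which is the
  update rule of the protocol up to the delays. The output of this min-plus map, truncated at
  \<open>k + 2\<close>, only depends on its inputs truncated at \<open>k + 1\<close>. Hence, by induction on \<open>k\<close>:
  once the graph has been frozen for \<open>(delta + 1) * k\<close> steps, the computed and the exact levels
  agree after truncation at \<open>k + 1\<close>, because every delayed value consulted was computed
  at most \<open>delta + 1\<close> steps earlier, still inside the frozen window.\<close>

definition level_agrees :: "nat \<Rightarrow> enat \<Rightarrow> nat \<Rightarrow> bool" where
  "level_agrees k e x \<longleftrightarrow> (e \<le> enat k \<longrightarrow> enat x = e) \<and> (\<not> e \<le> enat k \<longrightarrow> k < x)"

lemma level_agrees_iff_min_eq:
  "level_agrees k e x \<longleftrightarrow> min e (enat (Suc k)) = min (enat x) (enat (Suc k))"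
  unfolding level_agrees_def by (cases e) (auto simp: min_def)

lemma walk_len_0_iff [simp]: "walk_len E l i 0 \<longleftrightarrow> l = i"
  unfolding walk_len_def by auto

lemma walk_len_snoc:
  assumes "walk_len E l j n" and "(j, i) \<in> E"
  shows "walk_len E l i (Suc n)"
proof -
  obtain p where p: "p 0 = l" "p n = j" "\<forall>k<n. (p k, p (Suc k)) \<in> E"
    using assms(1) unfolding walk_len_def by blast
  have "\<forall>k<Suc n. ((p(Suc n := i)) k, (p(Suc n := i)) (Suc k)) \<in> E"
    using p assms(2) by (auto simp: less_Suc_eq)
  then show ?thesis
    unfolding walk_len_def using p(1) by (intro exI[of _ "p(Suc n := i)"]) simp
qed

lemma walk_len_SucE:
  assumes "walk_len E l i (Suc n)"
  obtains j where "walk_len E l j n" and "(j, i) \<in> E"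
  using assms unfolding walk_len_def by (metis lessI less_SucI)

lemma gdist_le_walk_len: "walk_len E l i n \<Longrightarrow> gdist E l i \<le> enat n"
  unfolding gdist_def by (auto intro: Least_le)

lemma walk_len_gdist: "gdist E l i = enat n \<Longrightarrow> walk_len E l i n"
  unfolding gdist_def by (auto split: if_splits intro: LeastI)

lemma gdist_eq_0_iff: "gdist E l i = 0 \<longleftrightarrow> l = i"
  using gdist_le_walk_len[of E l i 0] walk_len_gdist[of E l i 0]
  by (auto simp: zero_enat_def[symmetric])

lemma gdist_edge_le:
  assumes "(j, i) \<in> E"
  shows "gdist E l i \<le> gdist E l j + 1"
proof (cases "gdist E l j")
  case (enat n)
  then have "walk_len E l i (Suc n)"
    using assms walk_len_gdist walk_len_snoc by metis
  then show ?thesis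
    using gdist_le_walk_len enat by (simp add: one_enat_def)
qed simp

lemma gdist_Suc_predecessor:
  assumes "gdist E l i = enat (Suc n)"
  obtains j where "(j, i) \<in> E" and "gdist E l j \<le> enat n"
  using walk_len_gdist[OF assms] by (elim walk_len_SucE) (blast dest: gdist_le_walk_len)

lemma INF_enat_attained:
  fixes f :: "'a \<Rightarrow> enat"
  assumes "A \<noteq> {}"
  obtains a where "a \<in> A" and "(INF x\<in>A. f x) = f a"
  using wellorder_InfI[of _ "f ` A"] assms by blast

lemma min_le_min_plus_1:
  fixes p a b :: enat
  assumes "a \<le> b + 1"
  shows "min p a \<le> min p b + 1"
proof (cases "p \<le> b")
  case True
  have "min p a \<le> p + 1" by (simp add: add_increasing2 min.coboundedI1)
  then show ?thesis using True by (simp add: min_def)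
next
  case False
  have "min p a \<le> b + 1" using assms by (simp add: min.coboundedI2)
  then show ?thesis using False by (simp add: min_def)
qed

lemma exact_level_le_pibar: "exact_level pibar L E i \<le> enat pibar"
  unfolding exact_level_def by simp

lemma exact_level_leader:
  assumes "l \<in> L"
  shows "exact_level pibar L E l = 0"
proof -
  have "(INF l'\<in>L. gdist E l' l) \<le> gdist E l l" using assms by (rule INF_lower)
  also have "gdist E l l = 0" by (simp add: gdist_eq_0_iff)
  finally show ?thesis unfolding exact_level_def by simp
qed

lemma exact_level_eq_0_iff:
  assumes "pibar \<ge> 1"
  shows "exact_level pibar L E i = 0 \<longleftrightarrow> i \<in> L"
proof
  assume zero: "exact_level pibar L E i = 0"
  then have inf0: "(INF l\<in>L. gdist E l i) = 0"
    using assms unfolding exact_level_def by (auto simp: min_def zero_enat_def split: if_splits)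
  then have "L \<noteq> {}" by (auto simp: top_enat_def)
  then obtain l where "l \<in> L" "(INF l\<in>L. gdist E l i) = gdist E l i"
    by (rule INF_enat_attained)
  then show "i \<in> L" using inf0 gdist_eq_0_iff by metis
qed (rule exact_level_leader)

lemma exact_level_edge_le:
  assumes "(j, i) \<in> E"
  shows "exact_level pibar L E i \<le> exact_level pibar L E j + 1"
proof (cases "L = {}")
  case False
  then obtain l where l: "l \<in> L" "(INF l\<in>L. gdist E l j) = gdist E l j"
    by (rule INF_enat_attained)
  have "(INF l\<in>L. gdist E l i) \<le> gdist E l i" using l(1) by (rule INF_lower)
  also have "\<dots> \<le> (INF l\<in>L. gdist E l j) + 1" using gdist_edge_le[OF assms] l(2) by simp
  finally show ?thesis
    unfolding exact_level_def by (rule min_le_min_plus_1)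
qed (simp add: exact_level_def)

lemma exact_level_strict_predecessor:
  assumes "i \<notin> L" and "exact_level pibar L E i < enat pibar"
  obtains j where "(j, i) \<in> E" and "j \<noteq> i"
    and "exact_level pibar L E j + 1 \<le> exact_level pibar L E i"
proof -
  have lev_i: "exact_level pibar L E i = (INF l\<in>L. gdist E l i)"
    using assms(2) unfolding exact_level_def by (simp add: min_def split: if_splits)
  then have "L \<noteq> {}" using assms(2) by (auto simp: top_enat_def)
  then obtain l where l: "l \<in> L" "(INF l\<in>L. gdist E l i) = gdist E l i"
    by (rule INF_enat_attained)
  obtain n where n: "gdist E l i = enat n"
    using assms(2) lev_i l(2) by (cases "gdist E l i") auto
  have "l \<noteq> i" using l(1) assms(1) by blast
  then obtain m where m: "n = Suc m"
    using n gdist_eq_0_iff[of E l i] by (cases n) (auto simp: zero_enat_def)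
  obtain j where j: "(j, i) \<in> E" "gdist E l j \<le> enat m"
    using gdist_Suc_predecessor n m by metis
  have "exact_level pibar L E j \<le> enat m"
    unfolding exact_level_def using j(2) l(1) by (meson INF_lower min.coboundedI2 order.trans)
  then have "exact_level pibar L E j + 1 \<le> exact_level pibar L E i"
    using lev_i l n m by (metis add_right_mono eSuc_enat eSuc_plus_1)
  moreover have "j \<noteq> i" using j(2) n m by auto
  ultimately show ?thesis using that j(1) by blast
qed

lemma exact_level_Bellman:
  assumes "i \<notin> L"
  shows "exact_level pibar L E i
     = min (enat pibar) (1 + (INF j\<in>{j. (j, i) \<in> E \<and> j \<noteq> i}. exact_level pibar L E j))"
    (is "?e i = min _ (1 + (INF j\<in>?A. ?e j))")
proof (rule antisym)
  have "?e i \<le> 1 + (INF j\<in>?A. ?e j)"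
  proof (cases "?A = {}")
    case True
    show ?thesis unfolding True by (simp add: top_enat_def)
  next
    case False
    then obtain j where "j \<in> ?A" "(INF j\<in>?A. ?e j) = ?e j" by (rule INF_enat_attained)
    then show ?thesis using exact_level_edge_le[of j i E] by (simp add: add.commute)
  qed
  then show "?e i \<le> min (enat pibar) (1 + (INF j\<in>?A. ?e j))"
    using exact_level_le_pibar by simp
next
  show "min (enat pibar) (1 + (INF j\<in>?A. ?e j)) \<le> ?e i"
  proof (cases "?e i < enat pibar")
    case True
    then obtain j where "j \<in> ?A" "?e j + 1 \<le> ?e i"
      using exact_level_strict_predecessor[OF assms] by blast
    then have "1 + (INF j\<in>?A. ?e j) \<le> 1 + ?e j" by (simp add: INF_lower add_left_mono)
    also have "\<dots> \<le> ?e i" using \<open>?e j + 1 \<le> ?e i\<close> by (simp add: add.commute)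
    finally have "1 + (INF j\<in>?A. ?e j) \<le> ?e i" .
    then show ?thesis by (rule min.coboundedI2)
  next
    case False
    then show ?thesis using exact_level_le_pibar[of pibar L E i] by simp
  qed
qed

lemma min_1_plus_min: "min (1 + x) (enat (Suc c)) = min (1 + min x (enat c)) (enat (Suc c))"
  by (cases x) (simp_all add: min_def one_enat_def)

lemma min_1_plus_INF_truncate:
  fixes f :: "'a \<Rightarrow> enat"
  shows "min (1 + (INF j\<in>A. f j)) (enat (Suc c))
       = min (1 + (INF j\<in>A. min (f j) (enat c))) (enat (Suc c))"
proof (cases "A = {}")
  case False
  have "(INF j\<in>A. min (f j) (enat c)) = min (INF j\<in>A. f j) (enat c)"
    using INF_inf_const2[OF False, of f "enat c"] by (simp only: inf_min)
  then show ?thesis using min_1_plus_min[of "INF j\<in>A. f j" c] by simp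
qed simp

lemma enat_Min_image:
  assumes "finite A" "A \<noteq> {}"
  shows "enat (Min (g ` A)) = (INF j\<in>A. enat (g j))"
proof -
  have "enat (Min (g ` A)) = Min (enat ` g ` A)"
    using assms by (intro mono_Min_commute) (auto simp: mono_def)
  also have "\<dots> = (INF j\<in>A. enat (g j))"
    using assms by (simp add: Min_Inf image_comp)
  finally show ?thesis .
qed

lemma min_update_truncation_eq:
  fixes f h :: "'a \<Rightarrow> enat"
  assumes "\<And>j. j \<in> A \<Longrightarrow> min (f j) (enat c) = min (h j) (enat c)"
  shows "min (min p (1 + (INF j\<in>A. f j))) (enat (Suc c))
       = min (min p (1 + (INF j\<in>A. h j))) (enat (Suc c))"
proof -
  have "(INF j\<in>A. min (f j) (enat c)) = (INF j\<in>A. min (h j) (enat c))"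
    using assms by (rule INF_cong[OF refl])
  then show ?thesis
    using min_1_plus_INF_truncate[of f A c] min_1_plus_INF_truncate[of h A c]
    by (simp add: min.assoc)
qed

lemma enat_follower_update:
  assumes "finite (N t i)"
  shows "enat (follower_update pibar lev N d t i)
       = min (enat pibar) (1 + (INF j\<in>N t i - {i}. enat (lev (t - d t j i - 1) j)))"
proof (cases "N t i - {i} = {}")
  case True
  show ?thesis unfolding follower_update_def Let_def True by (simp add: top_enat_def)
next
  case False
  then show ?thesis
    unfolding follower_update_def Let_def
    using enat_Min_image[of "N t i - {i}" "\<lambda>j. lev (t - d t j i - 1) j", symmetric] assms
    by (simp add: one_enat_def)
qed

locale hierarchy_dynamics =
  fixes V L :: "'a set"
    and N :: "nat \<Rightarrow> 'a \<Rightarrow> 'a set"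
    and d :: "nat \<Rightarrow> 'a \<Rightarrow> 'a \<Rightarrow> nat"
    and lev :: "nat \<Rightarrow> 'a \<Rightarrow> nat"
    and pibar delta :: nat
  assumes finite_V: "finite V"
    and pibar_pos: "pibar \<ge> 1"
    and N_subset: "\<And>t i. i \<in> V \<Longrightarrow> N t i \<subseteq> V"
    and delay_bound: "\<And>t i j. t \<ge> 1 \<Longrightarrow> i \<in> V - L \<Longrightarrow> j \<in> N t i - {i} \<Longrightarrow>
                         d t j i \<le> delta \<and> d t j i + 1 \<le> t"
    and leaders: "\<And>t l. l \<in> L \<Longrightarrow> lev t l = 0"
    and init: "\<And>i. i \<in> V - L \<Longrightarrow> lev 0 i = pibar"
    and update: "\<And>t i. t \<ge> 1 \<Longrightarrow> i \<in> V - L \<Longrightarrow> lev t i = follower_update pibar lev N d t i"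
begin

lemma lev_follower_pos:
  assumes "i \<in> V - L"
  shows "0 < lev t i"
proof (cases t)
  case 0
  then show ?thesis using init[OF assms] pibar_pos by simp
next
  case (Suc s)
  then show ?thesis
    using update[of t i] assms pibar_pos by (simp add: follower_update_def Let_def)
qed

lemma level_agrees_leader: "l \<in> L \<Longrightarrow> level_agrees k (exact_level pibar L E l) (lev t l)"
  by (simp add: level_agrees_def exact_level_leader leaders zero_enat_def[symmetric])

lemma level_agrees_0:
  assumes "i \<in> V"
  shows "level_agrees 0 (exact_level pibar L E i) (lev t i)"
proof (cases "i \<in> L")
  case False
  then have "\<not> exact_level pibar L E i \<le> enat 0"
    by (simp add: exact_level_eq_0_iff[OF pibar_pos] zero_enat_def[symmetric])
  moreover have "0 < lev t i" using assms False by (simp add: lev_follower_pos)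
  ultimately show ?thesis unfolding level_agrees_def by blast
qed (rule level_agrees_leader)

lemma level_agrees_Suc:
  assumes i: "i \<in> V - L" and t: "1 \<le> t" and E: "edges V N t = E"
    and IH: "\<And>j. j \<in> N t i - {i} \<Longrightarrow>
               level_agrees k (exact_level pibar L E j) (lev (t - d t j i - 1) j)"
  shows "level_agrees (Suc k) (exact_level pibar L E i) (lev t i)"
proof -
  have nbrs: "N t i - {i} = {j. (j, i) \<in> E \<and> j \<noteq> i}"
    using i E unfolding edges_def by auto
  have "finite (N t i)" using i N_subset finite_V finite_subset by blast
  then have lev_i: "enat (lev t i)
      = min (enat pibar) (1 + (INF j\<in>N t i - {i}. enat (lev (t - d t j i - 1) j)))"
    using update[OF t i] enat_follower_update by simp
  have ex_i: "exact_level pibar L E i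
      = min (enat pibar) (1 + (INF j\<in>N t i - {i}. exact_level pibar L E j))"
    unfolding nbrs using i by (intro exact_level_Bellman) blast
  show ?thesis
    unfolding level_agrees_iff_min_eq ex_i lev_i
    using IH by (intro min_update_truncation_eq) (simp add: level_agrees_iff_min_eq)
qed

lemma level_agrees_on_static_window:
  assumes static: "\<And>s. t0 \<le> s \<Longrightarrow> s \<le> t1 \<Longrightarrow> edges V N s = E"
  shows "t0 + (delta + 1) * k \<le> t \<Longrightarrow> t \<le> t1 \<Longrightarrow> i \<in> V \<Longrightarrow>
           level_agrees k (exact_level pibar L E i) (lev t i)"
proof (induction k arbitrary: t i)
  case 0
  then show ?case by (simp add: level_agrees_0)
next
  case (Suc k)
  show ?case
  proof (cases "i \<in> L")
    case False
    have t_lower: "t0 + (delta + 1) + (delta + 1) * k \<le> t" using Suc.prems(1) by simp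
    then have t: "1 \<le> t" by simp
    show ?thesis
    proof (rule level_agrees_Suc)
      show "i \<in> V - L" using Suc.prems(3) False by blast
      show "edges V N t = E" using static t_lower Suc.prems(2) by simp
      fix j assume j: "j \<in> N t i - {i}"
      have "d t j i \<le> delta" "d t j i + 1 \<le> t"
        using delay_bound[OF t _ j] Suc.prems(3) False by auto
      then have "t0 + (delta + 1) * k \<le> t - d t j i - 1" "t - d t j i - 1 \<le> t1"
        using t_lower Suc.prems(2) by linarith+
      moreover have "j \<in> V" using j N_subset Suc.prems(3) by blast
      ultimately show "level_agrees k (exact_level pibar L E j) (lev (t - d t j i - 1) j)"
        by (rule Suc.IH)
    qed (rule t)
  qed (rule level_agrees_leader)
qed

end

theorem mainTheorem1:
  fixes V L :: "'a set"
    and N :: "nat \<Rightarrow> 'a \<Rightarrow> 'a set"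
    and d :: "nat \<Rightarrow> 'a \<Rightarrow> 'a \<Rightarrow> nat"
    and lev :: "nat \<Rightarrow> 'a \<Rightarrow> nat"
    and pibar delta D tbar :: nat
  assumes finV: "finite V"
    and LV: "L \<subseteq> V"
    and pibar_pos: "pibar \<ge> 1"
    and N_sub: "\<And>t i. i \<in> V \<Longrightarrow> N t i \<subseteq> V"
    and N_self: "\<And>t i. i \<in> V \<Longrightarrow> i \<in> N t i"
    and delay_bound: "\<And>t i j. t \<ge> 1 \<Longrightarrow> i \<in> V - L \<Longrightarrow> j \<in> N t i - {i} \<Longrightarrow>
                         d t j i \<le> delta \<and> d t j i + 1 \<le> t"
    and leaders: "\<And>t l. l \<in> L \<Longrightarrow> lev t l = 0"
    and init: "\<And>i. i \<in> V - L \<Longrightarrow> lev 0 i = pibar"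
    and update: "\<And>t i. t \<ge> 1 \<Longrightarrow> i \<in> V - L \<Longrightarrow> lev t i = follower_update pibar lev N d t i"
    and D_le: "D \<le> pibar"
    and tbar_ge: "tbar \<ge> (delta + 1) * D"
    and static: "\<And>s. tbar - (delta + 1) * D \<le> s \<Longrightarrow> s \<le> tbar \<Longrightarrow> edges V N s = edges V N tbar"
    and iV: "i \<in> V"
  shows "(exact_level pibar L (edges V N tbar) i \<le> enat D \<longrightarrow>
            enat (lev tbar i) = exact_level pibar L (edges V N tbar) i)
       \<and> (\<not> exact_level pibar L (edges V N tbar) i \<le> enat D \<longrightarrow> lev tbar i > D)"
proof -
  interpret hierarchy_dynamics V L N d lev pibar delta
    using finV pibar_pos N_sub delay_bound leaders init update by unfold_locales
  have "level_agrees D (exact_level pibar L (edges V N tbar) i) (lev tbar i)"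
  proof (rule level_agrees_on_static_window[OF static])
    show "tbar - (delta + 1) * D + (delta + 1) * D \<le> tbar" using tbar_ge by simp
    show "tbar \<le> tbar" by (rule order.refl)
    show "i \<in> V" by (rule iV)
  qed
  then show ?thesis unfolding level_agrees_def by blast
qed

end
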